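(* Let $n\ge1$ be an integer. The following are equivalent: (a) $n\le3$; (b) for every $j\in\{1,\dots,n+2\}$, the function $\lambda\mapsto\lambda_{n,j}(\lambda)-1/n$ does not change sign on the interval $(1/n,\infty)$.
   Context: For an integer $n\ge1$ let $f_n(x)=(1+x)^{n+1}/x$ for $x>0$. The function $f_n$ is strictly decreasing on $(0,1/n]$ and strictly increasing on $[1/n,\infty)$. Regular graph exponents (Schmidt–Summerer), defined algebraically. For $\lambda\in[1/n,\infty)$ let $\mu\in(0,1/n]$ be the unique solution of $f_n(\mu)=f_n(\lambda)$, and set $$\lambda_{n,j}(\lambda)=\lambda^{1-\frac{j-1}{n+1}}\mu^{\frac{j-1}{n+1}},\qquad 1\le j\le n+2 .$$ All ratios $\lambda_{n,j}/\lambda_{n,j+1}$ are equal. These are the exponents $\lambda_{n,j}$ of the regular graph in dimension $n$ with parameter $\lambda_n=\lambda$. *)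

theory Defs
  imports Complex_Main
begin

definition f_reg :: "nat \<Rightarrow> real \<Rightarrow> real" where
  "f_reg n x = (1 + x) ^ (n + 1) / x"

definition mu_reg :: "nat \<Rightarrow> real \<Rightarrow> real" where
  "mu_reg n lam = (THE m. 0 < m \<and> m \<le> 1 / real n \<and> f_reg n m = f_reg n lam)"

definition lambda_reg :: "nat \<Rightarrow> nat \<Rightarrow> real \<Rightarrow> real" where
  "lambda_reg n j lam =
     lam powr (1 - (real j - 1) / (real n + 1)) * (mu_reg n lam) powr ((real j - 1) / (real n + 1))"

end

theory Submission
  imports Defs
begin

text \<open>Write \<open>S = 1 + q + \<dots> + q\<^sup>n\<^sup>-\<^sup>1\<close>. For \<open>q > 1\<close> the pair \<open>\<lambda> = q\<^sup>n / S\<close>, \<open>\<mu> = 1 / (q S)\<close>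
  satisfies \<open>f\<^sub>n(\<mu>) = f\<^sub>n(\<lambda>)\<close> (both equal \<open>(1 + q + \<dots> + q\<^sup>n)\<^sup>n\<^sup>+\<^sup>1 / (q S)\<^sup>n\<close>), and \<open>q\<close> runs
  through all \<open>\<lambda> > 1/n\<close>. Since \<open>\<lambda>/\<mu> = q\<^sup>n\<^sup>+\<^sup>1\<close>, the exponents are \<open>\<lambda>\<^sub>n\<^sub>,\<^sub>j = \<lambda> / q\<^sup>j\<^sup>-\<^sup>1\<close>, so
  the sign of \<open>\<lambda>\<^sub>n\<^sub>,\<^sub>j - 1/n\<close> is that of \<open>n q\<^sup>n - S q\<^sup>j\<^sup>-\<^sup>1\<close>. This is \<open>\<ge> 0\<close> for \<open>j \<le> 2\<close>,
  \<open>\<le> 0\<close> for \<open>j \<ge> n + 1\<close>, and equal to \<open>-q\<^sup>2(q - 1)\<^sup>2\<close> for \<open>n = j = 3\<close>; but for \<open>n \<ge> 4\<close> and \<open>j = 3\<close>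
  it is positive for \<open>1 < q < n - 2\<close> and negative for \<open>q = n\<close>.\<close>

definition geom_sum :: "nat \<Rightarrow> real \<Rightarrow> real" where
  "geom_sum n q = (\<Sum>i<n. q ^ i)"

lemma geom_sum_Suc: "geom_sum (Suc n) q = geom_sum n q + q ^ n"
  by (simp add: geom_sum_def)

lemma geom_sum_Suc_shift: "geom_sum (Suc n) q = 1 + q * geom_sum n q"
  unfolding geom_sum_def sum.lessThan_Suc_shift by (simp add: sum_distrib_left)

lemma geom_sum_ge: "q \<ge> 1 \<Longrightarrow> real n \<le> geom_sum n q"
  using sum_mono[of "{..<n}" "\<lambda>_. 1::real" "\<lambda>i. q ^ i"]
  by (simp add: geom_sum_def one_le_power)

lemma geom_sum_pos: "q \<ge> 1 \<Longrightarrow> n \<ge> 1 \<Longrightarrow> geom_sum n q > 0"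
  using geom_sum_ge[of q n] by simp

lemma geom_sum_le:
  assumes "q \<ge> 1"
  shows "geom_sum n q \<le> real n * q ^ (n - 1)"
proof -
  have "(\<Sum>i<n. q ^ i) \<le> (\<Sum>i<n. q ^ (n - 1))"
    by (intro sum_mono) (auto intro: power_increasing simp: assms)
  then show ?thesis by (simp add: geom_sum_def)
qed

lemma geom_sum_less: "q > 1 \<Longrightarrow> n \<ge> 1 \<Longrightarrow> geom_sum n q < real n * q ^ n"
  using sum_strict_mono[of "{..<n}" "\<lambda>i. q ^ i" "\<lambda>_. q ^ n"]
  by (auto simp: geom_sum_def lessThan_empty_iff intro: power_strict_increasing)

lemma has_real_derivative_f_reg:
  assumes "x > 0"
  shows "(f_reg n has_real_derivative (1 + x) ^ n * (real n * x - 1) / x\<^sup>2) (at x)"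
proof -
  have "((\<lambda>x. (1 + x) ^ Suc n) has_real_derivative real (Suc n) * 1 * (1 + x) ^ (Suc n - 1)) (at x)"
    by (intro DERIV_power derivative_eq_intros) auto
  from DERIV_divide[OF this DERIV_ident] assms
  have "((\<lambda>x. (1 + x) ^ Suc n / x) has_real_derivative
      (real (Suc n) * (1 + x) ^ n * x - (1 + x) ^ Suc n * 1) / (x * x)) (at x)"
    by simp
  moreover have "(real (Suc n) * (1 + x) ^ n * x - (1 + x) ^ Suc n * 1) / (x * x)
      = (1 + x) ^ n * (real n * x - 1) / x\<^sup>2"
    by (simp add: power2_eq_square algebra_simps)
  ultimately show ?thesis
    unfolding f_reg_def[abs_def] by simp
qed

lemma f_reg_strict_antimono:
  assumes "0 < x" "x < y" "y \<le> 1 / real n"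
  shows "f_reg n y < f_reg n x"
proof (rule DERIV_neg_imp_decreasing_open[OF assms(2)])
  fix z assume z: "x < z" "z < y"
  have "real n * z < 1"
  proof (cases "n = 0")
    case False
    then have "z < 1 / real n" using z assms by simp
    then show ?thesis using False by (simp add: field_simps)
  qed simp
  then show "\<exists>d. (f_reg n has_real_derivative d) (at z) \<and> d < 0"
    using has_real_derivative_f_reg[of z n] z assms
    by (intro exI[of _ "(1 + z) ^ n * (real n * z - 1) / z\<^sup>2"]) (auto intro!: divide_neg_pos mult_pos_neg)
next
  show "continuous_on {x..y} (f_reg n)"
    unfolding f_reg_def[abs_def] using assms by (intro continuous_intros) auto
qed

lemma mu_reg_eqI:
  assumes "0 < m" "m \<le> 1 / real n" "f_reg n m = f_reg n lam"
  shows "mu_reg n lam = m"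
  unfolding mu_reg_def
proof (rule the_equality)
  fix m' assume m': "0 < m' \<and> m' \<le> 1 / real n \<and> f_reg n m' = f_reg n lam"
  show "m' = m"
    using f_reg_strict_antimono[of m' m n] f_reg_strict_antimono[of m m' n] m' assms
    by (cases m' m rule: linorder_cases) auto
qed (use assms in simp)

lemma f_reg_param:
  assumes "q > 1" "n \<ge> 1"
  shows "f_reg n (1 / (q * geom_sum n q)) = f_reg n (q ^ n / geom_sum n q)"
proof -
  define S T where "S = geom_sum n q" and "T = geom_sum (Suc n) q"
  have S: "S > 0" using geom_sum_pos assms unfolding S_def by simp
  have "1 + 1 / (q * S) = T / (q * S)"
    using geom_sum_Suc_shift[of n q] assms S unfolding S_def T_def by (simp add: field_simps)
  moreover have "1 + q ^ n / S = T / S"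
    using geom_sum_Suc[of n q] S unfolding S_def T_def by (simp add: field_simps)
  ultimately show ?thesis
    unfolding f_reg_def S_def[symmetric] using assms S
    by (simp add: power_divide power_mult_distrib field_simps)
qed

lemma mu_reg_param:
  assumes "q > 1" "n \<ge> 1"
  shows "mu_reg n (q ^ n / geom_sum n q) = 1 / (q * geom_sum n q)"
proof (rule mu_reg_eqI[OF _ _ f_reg_param[OF assms]])
  have "real n \<le> geom_sum n q" "geom_sum n q \<le> q * geom_sum n q"
    using geom_sum_ge[of q n] geom_sum_pos[of q n] assms by auto
  then have "real n \<le> q * geom_sum n q" by linarith
  then show "1 / (q * geom_sum n q) \<le> 1 / real n"
    using assms by (simp add: frac_le)
qed (use assms geom_sum_pos in simp)

lemma lambda_reg_param:
  assumes q: "q > 1" and n: "n \<ge> 1" and j: "j \<ge> 1"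
  shows "lambda_reg n j (q ^ n / geom_sum n q) = q ^ n / (geom_sum n q * q ^ (j - 1))"
proof -
  define L t where "L = q ^ n / geom_sum n q" and "t = (real j - 1) / (real n + 1)"
  have S: "geom_sum n q > 0" using geom_sum_pos q n by simp
  then have L: "L > 0" using q unfolding L_def by simp
  have "mu_reg n L = L / q powr real (n + 1)"
    using mu_reg_param[OF q n] q powr_realpow[of q "n + 1"] unfolding L_def by simp
  then have "lambda_reg n j L = L powr (1 - t) * L powr t / q powr (real (n + 1) * t)"
    using L q unfolding lambda_reg_def t_def[symmetric] by (simp add: powr_divide powr_powr)
  also have "real (n + 1) * t = real (j - 1)"
    using j unfolding t_def by (simp add: of_nat_diff add.commute)
  finally show ?thesis
    using L S q unfolding L_def by (simp add: powr_add[symmetric] powr_realpow)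
qed

lemma param_gt_inverse: "q > 1 \<Longrightarrow> n \<ge> 1 \<Longrightarrow> 1 / real n < q ^ n / geom_sum n q"
  using geom_sum_less[of q n] geom_sum_pos[of q n] by (simp add: field_simps)

lemma param_surj:
  assumes n: "n \<ge> 1" and lam: "lam > 1 / real n"
  obtains q where "q > 1" "lam = q ^ n / geom_sum n q"
proof -
  define Q where "Q = real n * lam"
  have Q: "Q > 1" using lam n unfolding Q_def by (simp add: field_simps)
  have "Q / real n \<le> Q ^ n / geom_sum n Q"
  proof -
    have "Q ^ n = Q * Q ^ (n - 1)" using n by (simp add: power_eq_if)
    then show ?thesis
      using geom_sum_le[of Q n] geom_sum_pos[of Q n] Q n by (simp add: field_simps)
  qed
  moreover have "Q / real n = lam" using n unfolding Q_def by simp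
  moreover have "isCont (\<lambda>q. q ^ n / geom_sum n q) x" if "1 \<le> x" for x
    using geom_sum_pos[OF that n] unfolding geom_sum_def by (intro continuous_intros) auto
  ultimately obtain q where q: "1 \<le> q" "q \<le> Q" "q ^ n / geom_sum n q = lam"
    using IVT[of "\<lambda>q. q ^ n / geom_sum n q" 1 lam Q] lam Q by (auto simp: geom_sum_def)
  moreover have "q \<noteq> 1" using q(3) lam by (auto simp: geom_sum_def)
  ultimately show thesis by (intro that[of q]) auto
qed

lemma all_lambda_reg_iff:
  assumes "n \<ge> 1" "j \<ge> 1"
  shows "(\<forall>lam > 1 / real n. P (lambda_reg n j lam))
     \<longleftrightarrow> (\<forall>q > 1. P (q ^ n / (geom_sum n q * q ^ (j - 1))))"
proof (intro iffI allI impI)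
  fix q :: real assume P: "\<forall>lam > 1 / real n. P (lambda_reg n j lam)" and q: "q > 1"
  show "P (q ^ n / (geom_sum n q * q ^ (j - 1)))"
    using P[rule_format, OF param_gt_inverse[OF q assms(1)]] unfolding lambda_reg_param[OF q assms] .
next
  fix lam assume P: "\<forall>q > 1. P (q ^ n / (geom_sum n q * q ^ (j - 1)))" and "lam > 1 / real n"
  obtain q where q: "q > 1" and lam: "lam = q ^ n / geom_sum n q"
    by (rule param_surj[OF assms(1) \<open>lam > 1 / real n\<close>])
  show "P (lambda_reg n j lam)"
    unfolding lam lambda_reg_param[OF q assms] using P[rule_format, OF q] .
qed

lemma param_ge_inverse_iff:
  assumes "q > 1" "n \<ge> 1"
  shows "1 / real n \<le> q ^ n / (geom_sum n q * q ^ k) \<longleftrightarrow> geom_sum n q * q ^ k \<le> real n * q ^ n"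
    and "q ^ n / (geom_sum n q * q ^ k) \<le> 1 / real n \<longleftrightarrow> real n * q ^ n \<le> geom_sum n q * q ^ k"
proof -
  have "geom_sum n q * q ^ k > 0" "real n > 0"
    using geom_sum_pos[of q n] assms by auto
  then show "1 / real n \<le> q ^ n / (geom_sum n q * q ^ k) \<longleftrightarrow> geom_sum n q * q ^ k \<le> real n * q ^ n"
    and "q ^ n / (geom_sum n q * q ^ k) \<le> 1 / real n \<longleftrightarrow> real n * q ^ n \<le> geom_sum n q * q ^ k"
    by (simp_all add: divide_le_eq le_divide_eq mult.commute)
qed

lemma lambda_reg_sign_iff:
  assumes "n \<ge> 1" "j \<ge> 1"
  shows "(\<forall>lam > 1 / real n. lambda_reg n j lam - 1 / real n \<ge> 0)
           \<longleftrightarrow> (\<forall>q > 1. geom_sum n q * q ^ (j - 1) \<le> real n * q ^ n)"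
    and "(\<forall>lam > 1 / real n. lambda_reg n j lam - 1 / real n \<le> 0)
           \<longleftrightarrow> (\<forall>q > 1. real n * q ^ n \<le> geom_sum n q * q ^ (j - 1))"
  using all_lambda_reg_iff[OF assms, of "\<lambda>x. 1 / real n \<le> x"]
    all_lambda_reg_iff[OF assms, of "\<lambda>x. x \<le> 1 / real n"]
  by (simp_all add: param_ge_inverse_iff[OF _ assms(1)] del: of_nat_le_iff)

lemma geom_sum_mult_le_of_le_1:
  assumes "q > 1" "n \<ge> 1" "k \<le> 1"
  shows "geom_sum n q * q ^ k \<le> real n * q ^ n"
proof -
  have "geom_sum n q * q ^ k \<le> real n * q ^ (n - 1) * q"
    using assms geom_sum_le[of q n] geom_sum_pos[of q n] power_increasing[of k 1 q]
    by (intro mult_mono) auto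
  also have "\<dots> = real n * q ^ n" using assms by (cases n) auto
  finally show ?thesis .
qed

lemma geom_sum_mult_ge_of_ge_n:
  assumes "q > 1" "k \<ge> n"
  shows "real n * q ^ n \<le> geom_sum n q * q ^ k"
  using assms geom_sum_ge[of q n] power_increasing[of n k q] by (intro mult_mono) auto

lemma geom_sum_3_mult_ge: "q > 1 \<Longrightarrow> 3 * q ^ 3 \<le> geom_sum 3 q * q\<^sup>2"
  using mult_right_mono[of "3 * q" "1 + q + q\<^sup>2" "q\<^sup>2"] sum_squares_ge_zero[of "q - 1" 0]
  by (simp add: geom_sum_def numeral_eq_Suc power2_eq_square power3_eq_cube algebra_simps)

lemma geom_sum_mult_gt_at_n:
  assumes "n \<ge> 2"
  shows "real n * real n ^ n < geom_sum n (real n) * real n ^ 2"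
proof -
  obtain k where k: "n = Suc (Suc k)" using assms by (metis add_2_eq_Suc le_Suc_ex)
  have "real n ^ Suc k < geom_sum n (real n)"
    using geom_sum_Suc[of "Suc k" "real n"] geom_sum_ge[of "real n" "Suc k"] k by simp
  then have "real n ^ Suc k * real n ^ 2 < geom_sum n (real n) * real n ^ 2"
    using k by simp
  then show ?thesis using k by (simp add: power2_eq_square mult.commute)
qed

text \<open>With \<open>m = n - 2\<close>, bounding the first \<open>m\<close> terms of \<open>S\<close> by \<open>q\<^sup>m\<^sup>-\<^sup>1\<close> reduces
  \<open>S q\<^sup>2 < n q\<^sup>n\<close> to \<open>m + q + q\<^sup>2 < (m + 2) q\<close>, i.e. to \<open>(q - 1)(q - m) < 0\<close>.\<close>
lemma geom_sum_mult_less: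
  assumes n: "n = m + 2" and q: "1 < q" "q < real m"
  shows "geom_sum n q * q\<^sup>2 < real n * q ^ n"
proof -
  obtain l where l: "m = Suc l" using q by (cases m) auto
  have "geom_sum n q = geom_sum m q + q ^ m + q ^ Suc m"
    using n by (simp add: geom_sum_Suc)
  also have "\<dots> \<le> real m * q ^ l + q ^ m + q ^ Suc m"
    using geom_sum_le[of q m] q l by simp
  also have "\<dots> = q ^ l * (real m + q + q\<^sup>2)"
    using l by (simp add: algebra_simps power2_eq_square)
  also have "\<dots> < q ^ l * ((real m + 2) * q)"
  proof (rule mult_strict_left_mono)
    have "(q - 1) * (q - real m) < 0" using q by (simp add: mult_pos_neg)
    then show "real m + q + q\<^sup>2 < (real m + 2) * q" by (simp add: algebra_simps power2_eq_square)
  qed (use q in simp)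
  finally have "geom_sum n q < real n * q ^ m"
    using n l by (simp add: algebra_simps)
  then have "geom_sum n q * q\<^sup>2 < real n * q ^ m * q\<^sup>2"
    using q by (intro mult_strict_right_mono) auto
  moreover have "q ^ n = q ^ m * q\<^sup>2" unfolding n by (rule power_add)
  ultimately show ?thesis by (simp add: mult.assoc)
qed

lemma geom_sum_mult_sign_constant:
  assumes "1 \<le> n" "n \<le> 3" "k \<le> n + 1"
  shows "(\<forall>q>1. geom_sum n q * q ^ k \<le> real n * q ^ n) \<or>
         (\<forall>q>1. real n * q ^ n \<le> geom_sum n q * q ^ k)"
proof -
  consider "k \<le> 1" | "k \<ge> n" | "n = 3" "k = 2" using assms by linarith
  then show ?thesis
    by cases (use assms geom_sum_mult_le_of_le_1 geom_sum_mult_ge_of_ge_n geom_sum_3_mult_ge in auto)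
qed

lemma geom_sum_mult_sign_change:
  assumes "n \<ge> 4"
  shows "\<exists>q>1. geom_sum n q * q\<^sup>2 < real n * q ^ n"
    and "\<exists>q>1. real n * q ^ n < geom_sum n q * q\<^sup>2"
proof -
  show "\<exists>q>1. geom_sum n q * q\<^sup>2 < real n * q ^ n"
    using assms geom_sum_mult_less[of n "n - 2" "3/2"] by (intro exI[of _ "3/2"]) auto
  show "\<exists>q>1. real n * q ^ n < geom_sum n q * q\<^sup>2"
    using assms geom_sum_mult_gt_at_n[of n] by (intro exI[of _ "real n"]) auto
qed

theorem corollary2p6:
  fixes n :: nat
  assumes "n \<ge> 1"
  shows "n \<le> 3 \<longleftrightarrow>
    (\<forall>j \<in> {1..n+2}.
       (\<forall>lam > 1 / real n. lambda_reg n j lam - 1 / real n \<ge> 0) \<or>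
       (\<forall>lam > 1 / real n. lambda_reg n j lam - 1 / real n \<le> 0))"
  unfolding Ball_def atLeastAtMost_iff
proof (simp only: lambda_reg_sign_iff[OF assms] imp_conjL cong: imp_cong, intro iffI allI impI)
  fix j :: nat assume "n \<le> 3" "1 \<le> j" "j \<le> n + 2"
  then show "(\<forall>q>1. geom_sum n q * q ^ (j - 1) \<le> real n * q ^ n) \<or>
             (\<forall>q>1. real n * q ^ n \<le> geom_sum n q * q ^ (j - 1))"
    using assms by (intro geom_sum_mult_sign_constant) auto
next
  assume sign_constant: "\<forall>j. 1 \<le> j \<longrightarrow> j \<le> n + 2 \<longrightarrow>
    (\<forall>q>1. geom_sum n q * q ^ (j - 1) \<le> real n * q ^ n) \<or>
    (\<forall>q>1. real n * q ^ n \<le> geom_sum n q * q ^ (j - 1))"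
  show "n \<le> 3"
  proof (rule ccontr)
    assume "\<not> n \<le> 3"
    then have "n \<ge> 4" by simp
    have "(\<forall>q>1. geom_sum n q * q\<^sup>2 \<le> real n * q ^ n) \<or>
          (\<forall>q>1. real n * q ^ n \<le> geom_sum n q * q\<^sup>2)"
      using sign_constant[rule_format, of 3] \<open>n \<ge> 4\<close> by (simp add: numeral_2_eq_2)
    with geom_sum_mult_sign_change[OF \<open>n \<ge> 4\<close>] show False
      by (meson not_le)
  qed
qed

end
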